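(* Greedy Dual is $(2m+1)$-competitive for both MPMD and MBPMD. That is, for every metric space and every instance $\mathcal{I}$ with $2m$ requests, the total cost (connection plus waiting) of the matching produced by Greedy Dual is at most $(2m+1)\cdot\mathrm{Opt}(\mathcal{I})$.
   Context: Problem (MPMD / MBPMD). Let $(\mathcal{X},\mathrm{dist})$ be a metric space. An instance consists of $2m$ requests $u_1,\dots,u_{2m}$. Each request $u$ is a triple $(\mathrm{pos}(u),\mathrm{atime}(u),\mathrm{sgn}(u))$, where $\mathrm{pos}(u)\in\mathcal{X}$ is its location and $\mathrm{atime}(u)\ge0$ is its arrival time, with arrival times nondecreasing. In MPMD, $\mathrm{sgn}(u)=0$ for all requests. In MBPMD, exactly $m$ requests have sign $+1$ and $m$ have sign $-1$. At time $\tau$, an algorithm may match two arrived, unmatched requests $u,v$ with $\mathrm{sgn}(u)=-\mathrm{sgn}(v)$, at cost $\mathrm{dist}(\mathrm{pos}(u),\mathrm{pos}(v))$ (connection cost) plus $(\tau-\mathrm{atime}(u))+(\tau-\mathrm{atime}(v))$ (waiting costs). All requests must eventually be matched. The online algorithm does not know future requests or $m$ in advance. $\mathrm{Opt}(\mathcal{I})$ denotes the minimum total cost of an offline solution that knows the whole input in advance. Notation. Edges are unordered pairs $\{u,v\}$ of distinct requests with $\mathrm{sgn}(u)=-\mathrm{sgn}(v)$. For a set $S$ of requests, $\delta(S)$ is the set of edges with exactly one endpoint in $S$. In MPMD, $\mathrm{sur}(S)=|S|\bmod 2$; in MBPMD, $\mathrm{sur}(S)=|\sum_{u\in S}\mathrm{sgn}(u)|$.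 For an edge $e=(u,v)$, $\mathrm{cost}(e)=\mathrm{dist}(\mathrm{pos}(u),\mathrm{pos}(v))+|\mathrm{atime}(u)-\mathrm{atime}(v)|$. Algorithm Greedy Dual (GD). GD maintains a dual variable $y_S\ge0$ for every set $S$ of already-arrived requests; $y_S(\tau)$ denotes its value at time $\tau$. It also maintains a partition of the arrived requests into active sets, with $\mathcal{A}(u)$ denoting the active set containing $u$. An active set is growing if it contains at least one free request, and non-growing otherwise. - When a request $u$ arrives, $\mathcal{A}(u)\leftarrow\{u\}$ becomes a new active set, and $y_S\leftarrow 0$ for every new set $S$ containing $u$. - Tight-constraint event: while there is an edge $e=(u,v)$ between arrived requests with $\mathcal{A}(u)\neq\mathcal{A}(v)$ and $\sum_{S:\,e\in\delta(S)}y_S=\mathrm{cost}(e)$, GD does the following. It merges the two sets: $S=\mathcal{A}(u)\cup\mathcal{A}(v)$ becomes active and $\mathcal{A}(w)\leftarrow S$ for all $w\in S$, while $\mathcal{A}(u)$ and $\mathcal{A}(v)$ become inactive. It marks the edge $e$. Then, while there are free $u',v'\in S$ with $\mathrm{sgn}(u')=-\mathrm{sgn}(v')$, it matches $u'$ with $v'$ at the current time. - At all other times, $y_S$ increases continuously at rate $1$ (the same rate as time) for every active growing set $S$; all other dual variables stay constant. *)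

theory Defs
  imports "HOL-Analysis.Analysis"
begin

text \<open>Requests are indexed 0..<n (n = 2m), sorted by arrival time.
  An instance is given by pos :: nat => 'a (metric space 'a),
  atime :: nat => real (arrival times) and sg :: nat => int (signs).\<close>

definition mpmd_instance :: "nat \<Rightarrow> (nat \<Rightarrow> real) \<Rightarrow> (nat \<Rightarrow> int) \<Rightarrow> bool" where
  "mpmd_instance m atime sg \<longleftrightarrow>
     (\<forall>u<2*m. 0 \<le> atime u) \<and> (\<forall>i j. i \<le> j \<longrightarrow> j < 2*m \<longrightarrow> atime i \<le> atime j) \<and>
     (\<forall>u<2*m. sg u = 0)"

definition mbpmd_instance :: "nat \<Rightarrow> (nat \<Rightarrow> real) \<Rightarrow> (nat \<Rightarrow> int) \<Rightarrow> bool" where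
  "mbpmd_instance m atime sg \<longleftrightarrow>
     (\<forall>u<2*m. 0 \<le> atime u) \<and> (\<forall>i j. i \<le> j \<longrightarrow> j < 2*m \<longrightarrow> atime i \<le> atime j) \<and>
     (\<forall>u<2*m. sg u = 1 \<or> sg u = -1) \<and>
     card {u. u < 2*m \<and> sg u = 1} = m \<and> card {u. u < 2*m \<and> sg u = -1} = m"

definition matching_cost ::
  "nat \<Rightarrow> (nat \<Rightarrow> 'a::metric_space) \<Rightarrow> (nat \<Rightarrow> real) \<Rightarrow> (nat \<Rightarrow> nat) \<Rightarrow> (nat \<Rightarrow> real) \<Rightarrow> real" where
  "matching_cost n pos atime mate mt =
     (\<Sum>u\<in>{u. u < n \<and> u < mate u}. dist (pos u) (pos (mate u))) + (\<Sum>u<n. mt u - atime u)"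

definition valid_solution ::
  "nat \<Rightarrow> (nat \<Rightarrow> real) \<Rightarrow> (nat \<Rightarrow> int) \<Rightarrow> (nat \<Rightarrow> nat) \<Rightarrow> (nat \<Rightarrow> real) \<Rightarrow> bool" where
  "valid_solution n atime sg mate mt \<longleftrightarrow>
     (\<forall>u<n. mate u < n \<and> mate u \<noteq> u \<and> mate (mate u) = u \<and> sg (mate u) = - sg u \<and>
            mt (mate u) = mt u \<and> atime u \<le> mt u)"

definition Opt :: "nat \<Rightarrow> (nat \<Rightarrow> 'a::metric_space) \<Rightarrow> (nat \<Rightarrow> real) \<Rightarrow> (nat \<Rightarrow> int) \<Rightarrow> real" where
  "Opt n pos atime sg = Inf {matching_cost n pos atime mate mt | mate mt. valid_solution n atime sg mate mt}"

definition ecost :: "(nat \<Rightarrow> 'a::metric_space) \<Rightarrow> (nat \<Rightarrow> real) \<Rightarrow> nat \<Rightarrow> nat \<Rightarrow> real" where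
  "ecost pos atime u v = dist (pos u) (pos v) + \<bar>atime u - atime v\<bar>"

definition dual_sum :: "nat \<Rightarrow> (nat set \<Rightarrow> real) \<Rightarrow> nat \<Rightarrow> nat \<Rightarrow> real" where
  "dual_sum n y u v = (\<Sum>S\<in>{S. S \<subseteq> {..<n} \<and> (u \<in> S) \<noteq> (v \<in> S)}. y S)"

text \<open>State of Greedy Dual: current time, number of arrived requests
  (requests 0..<narr have arrived), the family of active sets, dual variables,
  free requests, and the matching built so far (partner and matching time).\<close>
record gd_state =
  tm :: real
  narr :: nat
  act :: "nat set set"
  yv :: "nat set \<Rightarrow> real"
  fr :: "nat set"
  mate :: "nat \<Rightarrow> nat"
  mtm :: "nat \<Rightarrow> real"

definition gd_init :: gd_state where
  "gd_init = \<lparr>tm = 0, narr = 0, act = {}, yv = (\<lambda>_. 0), fr = {}, mate = id, mtm = (\<lambda>_. 0)\<rparr>"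

definition cross_edge :: "(nat \<Rightarrow> int) \<Rightarrow> gd_state \<Rightarrow> nat \<Rightarrow> nat \<Rightarrow> bool" where
  "cross_edge sg s u v \<longleftrightarrow> u < narr s \<and> v < narr s \<and> u \<noteq> v \<and> sg u = - sg v \<and>
     (\<exists>Su\<in>act s. \<exists>Sv\<in>act s. u \<in> Su \<and> v \<in> Sv \<and> Su \<noteq> Sv)"

definition tight_edge ::
  "nat \<Rightarrow> (nat \<Rightarrow> 'a::metric_space) \<Rightarrow> (nat \<Rightarrow> real) \<Rightarrow> (nat \<Rightarrow> int) \<Rightarrow> gd_state \<Rightarrow> nat \<Rightarrow> nat \<Rightarrow> bool" where
  "tight_edge n pos atime sg s u v \<longleftrightarrow> cross_edge sg s u v \<and> dual_sum n (yv s) u v = ecost pos atime u v"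

definition gd_arrive :: "nat \<Rightarrow> (nat \<Rightarrow> real) \<Rightarrow> gd_state \<Rightarrow> gd_state \<Rightarrow> bool" where
  "gd_arrive n atime s s' \<longleftrightarrow> narr s < n \<and> atime (narr s) = tm s \<and>
     s' = s\<lparr>narr := Suc (narr s), act := insert {narr s} (act s), fr := insert (narr s) (fr s)\<rparr>"

text \<open>Tight-constraint event: merge A(u) and A(v), then greedily match free
  compatible pairs inside the merged set atime the current time until none is left
  (the result of the greedy loop is exactly an arbitrary maximal matching of the
  free compatible requests of the merged set).\<close>
definition gd_merge ::
  "nat \<Rightarrow> (nat \<Rightarrow> 'a::metric_space) \<Rightarrow> (nat \<Rightarrow> real) \<Rightarrow> (nat \<Rightarrow> int) \<Rightarrow> gd_state \<Rightarrow> gd_state \<Rightarrow> bool" where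
  "gd_merge n pos atime sg s s' \<longleftrightarrow>
     (\<exists>u v Su Sv. Su \<in> act s \<and> Sv \<in> act s \<and> Su \<noteq> Sv \<and> u \<in> Su \<and> v \<in> Sv \<and>
        tight_edge n pos atime sg s u v \<and>
        tm s' = tm s \<and> narr s' = narr s \<and> yv s' = yv s \<and>
        act s' = insert (Su \<union> Sv) (act s - {Su, Sv}) \<and>
        fr s' \<subseteq> fr s \<and> fr s - fr s' \<subseteq> Su \<union> Sv \<and>
        (\<forall>w \<in> fr s - fr s'. mate s' w \<in> fr s - fr s' \<and> mate s' w \<noteq> w \<and>
            mate s' (mate s' w) = w \<and> sg (mate s' w) = - sg w \<and> mtm s' w = tm s) \<and>
        (\<forall>w. w \<notin> fr s - fr s' \<longrightarrow> mate s' w = mate s w \<and> mtm s' w = mtm s w) \<and>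
        \<not> (\<exists>a\<in>fr s' \<inter> (Su \<union> Sv). \<exists>b\<in>fr s' \<inter> (Su \<union> Sv). a \<noteq> b \<and> sg a = - sg b))"

text \<open>Dual growth: time advances from tm s to t'; every active growing set
  (containing a free request) raises its dual atime rate 1.  Allowed only if no
  constraint is tight, no pending arrival occurs before t', and no constraint
  is exceeded atime t' (so the next event happens no earlier than t').\<close>
definition grown_duals :: "gd_state \<Rightarrow> real \<Rightarrow> nat set \<Rightarrow> real" where
  "grown_duals s t' = (\<lambda>S. if S \<in> act s \<and> S \<inter> fr s \<noteq> {} then yv s S + (t' - tm s) else yv s S)"

definition gd_advance ::
  "nat \<Rightarrow> (nat \<Rightarrow> 'a::metric_space) \<Rightarrow> (nat \<Rightarrow> real) \<Rightarrow> (nat \<Rightarrow> int) \<Rightarrow> gd_state \<Rightarrow> gd_state \<Rightarrow> bool" where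
  "gd_advance n pos atime sg s s' \<longleftrightarrow>
     (\<exists>t'. tm s < t' \<and>
        (\<forall>u v. \<not> tight_edge n pos atime sg s u v) \<and>
        (\<forall>u. narr s \<le> u \<and> u < n \<longrightarrow> t' \<le> atime u) \<and>
        (\<forall>u v. cross_edge sg s u v \<longrightarrow> dual_sum n (grown_duals s t') u v \<le> ecost pos atime u v) \<and>
        s' = s\<lparr>tm := t', yv := grown_duals s t'\<rparr>)"

definition gd_step ::
  "nat \<Rightarrow> (nat \<Rightarrow> 'a::metric_space) \<Rightarrow> (nat \<Rightarrow> real) \<Rightarrow> (nat \<Rightarrow> int) \<Rightarrow> gd_state \<Rightarrow> gd_state \<Rightarrow> bool" where
  "gd_step n pos atime sg s s' \<longleftrightarrow>
     gd_arrive n atime s s' \<or> gd_merge n pos atime sg s s' \<or> gd_advance n pos atime sg s s'"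

definition gd_final_state ::
  "nat \<Rightarrow> (nat \<Rightarrow> 'a::metric_space) \<Rightarrow> (nat \<Rightarrow> real) \<Rightarrow> (nat \<Rightarrow> int) \<Rightarrow> gd_state \<Rightarrow> bool" where
  "gd_final_state n pos atime sg s \<longleftrightarrow>
     (gd_step n pos atime sg)\<^sup>*\<^sup>* gd_init s \<and> narr s = n \<and> fr s = {}"

end

theory Submission
  imports Defs
begin

text \<open>Greedy Dual maintains a feasible solution \<open>y\<close> of the dual of the matching LP, whose
  objective \<open>\<Sum>\<^sub>S y\<^sub>S \<cdot> sur(S)\<close> is a lower bound on \<open>Opt\<close>: every perfect matching has at least
  \<open>sur(S)\<close> pairs leaving \<open>S\<close>. Every free request lies in a growing active set, and the surplus
  of an active set is exactly its number of free requests, so the dual objective grows at the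
  same rate as the waiting cost and the two stay equal. For the connection cost, the two
  requests of a matched pair lie in a common active set \<open>S\<close>, and the tight edges along which
  \<open>S\<close> was merged bound their distance by \<open>\<Sum>{y\<^sub>T \<cdot> |{u,v} - T| | T \<subseteq> S} \<le> 2 \<Sum>\<^sub>T y\<^sub>T\<close>, which is at
  most twice the dual objective. With \<open>m\<close> pairs the total cost is at most \<open>(2m + 1) Opt\<close>.\<close>

lemma sum_fixfree_involution:
  fixes f :: "'a::linorder \<Rightarrow> 'b::comm_monoid_add"
  assumes "finite C"
    and g: "\<And>u. u \<in> C \<Longrightarrow> g u \<in> C" "\<And>u. u \<in> C \<Longrightarrow> g (g u) = u" "\<And>u. u \<in> C \<Longrightarrow> g u \<noteq> u"
  shows "sum f C = (\<Sum>u\<in>{u\<in>C. u < g u}. f u + f (g u))"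
proof -
  define P where "P = {u\<in>C. u < g u}"
  have C: "C = P \<union> g ` P"
  proof
    show "C \<subseteq> P \<union> g ` P"
    proof
      fix u assume u: "u \<in> C"
      show "u \<in> P \<union> g ` P"
      proof (cases "u < g u")
        case False
        then have "g u \<in> P" "u = g (g u)" using g u less_linear unfolding P_def by fastforce+
        then show ?thesis by blast
      qed (use u in \<open>simp add: P_def\<close>)
    qed
  qed (use g in \<open>auto simp: P_def\<close>)
  have inj: "inj_on g P" using g(2) unfolding P_def by (metis (no_types, lifting) inj_onI mem_Collect_eq)
  have "P \<inter> g ` P = {}" using g(2) unfolding P_def by force
  moreover have "finite P" using \<open>finite C\<close> unfolding P_def by simp
  ultimately have "sum f C = sum f P + sum f (g ` P)"
    by (subst C) (rule sum.union_disjoint, auto)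
  also have "sum f (g ` P) = (\<Sum>u\<in>P. f (g u))" using sum.reindex[OF inj] by simp
  finally show ?thesis unfolding P_def by (simp add: sum.distrib)
qed

lemma card_fixfree_involution:
  fixes C :: "'a::linorder set"
  assumes "finite C" "\<And>u. u \<in> C \<Longrightarrow> g u \<in> C" "\<And>u. u \<in> C \<Longrightarrow> g (g u) = u" "\<And>u. u \<in> C \<Longrightarrow> g u \<noteq> u"
  shows "card C = 2 * card {u\<in>C. u < g u}"
  using sum_fixfree_involution[OF assms, of "\<lambda>_. 1::nat"] by simp

lemma sum_mono_support:
  fixes y :: "'b \<Rightarrow> real"
  assumes "finite A" "finite B" "\<And>T. T \<in> A \<Longrightarrow> y T \<noteq> 0 \<Longrightarrow> T \<in> B" "\<And>T. T \<in> B \<Longrightarrow> 0 \<le> y T"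
  shows "sum y A \<le> sum y B"
proof -
  have "sum y A = sum y (A \<inter> B)"
    using assms by (intro sum.mono_neutral_right) auto
  also have "\<dots> \<le> sum y B" using assms by (intro sum_mono2) auto
  finally show ?thesis .
qed

lemma refines_merge:
  assumes P: "partition_on A P" and pq: "p \<in> P" "q \<in> P" "p \<noteq> q"
  shows "refines A P (insert (p \<union> q) (P - {p, q}))"
proof -
  have "partition_on A (insert (p \<union> q) (P - {p, q}))"
  proof (rule partition_onI)
    show "\<Union> (insert (p \<union> q) (P - {p, q})) = A" using partition_onD1[OF P] pq by auto
    show "{} \<notin> insert (p \<union> q) (P - {p, q})" using partition_onD3[OF P] pq by auto
    show "disjnt r r'" if "r \<in> insert (p \<union> q) (P - {p, q})" "r' \<in> insert (p \<union> q) (P - {p, q})" "r \<noteq> r'"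
      for r r'
      using that disjointD[OF partition_onD2[OF P]] pq unfolding disjnt_def by blast
  qed
  moreover have "\<exists>Y\<in>insert (p \<union> q) (P - {p, q}). X \<subseteq> Y" if "X \<in> P" for X
    using that by (cases "X = p \<or> X = q") auto
  ultimately show ?thesis using P by (simp add: refines_def)
qed

definition outside_weight :: "nat set \<Rightarrow> nat \<Rightarrow> nat \<Rightarrow> real" where
  "outside_weight T u v = of_bool (u \<notin> T) + of_bool (v \<notin> T)"

lemma outside_weight_nonneg: "0 \<le> outside_weight T u v"
  by (simp add: outside_weight_def)

lemma outside_weight_le_2: "outside_weight T u v \<le> 2"
  by (simp add: outside_weight_def)

lemma outside_weight_commute: "outside_weight T u v = outside_weight T v u"
  by (simp add: outside_weight_def)

lemma sum_outside_weight_extend: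
  assumes "finite S" "z \<notin> S"
  shows "(\<Sum>T\<in>Pow S. y T * outside_weight T x a) + (\<Sum>T\<in>{T\<in>Pow S. a \<in> T}. y T)
       = (\<Sum>T\<in>Pow S. y T * outside_weight T x z)"
proof -
  have "(\<Sum>T\<in>{T\<in>Pow S. a \<in> T}. y T) = (\<Sum>T\<in>Pow S. if a \<in> T then y T else 0)"
    by (rule sum.inter_filter) (use assms(1) in simp)
  also have "\<dots> = (\<Sum>T\<in>Pow S. y T * of_bool (a \<in> T))"
    by (rule sum.cong) auto
  finally have filter: "(\<Sum>T\<in>{T\<in>Pow S. a \<in> T}. y T) = (\<Sum>T\<in>Pow S. y T * of_bool (a \<in> T))" .
  have "outside_weight T x a + of_bool (a \<in> T) = outside_weight T x z" if "T \<in> Pow S" for T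
    using that assms(2) by (auto simp: outside_weight_def)
  then have "(\<Sum>T\<in>Pow S. y T * outside_weight T x a + y T * of_bool (a \<in> T))
       = (\<Sum>T\<in>Pow S. y T * outside_weight T x z)"
    by (intro sum.cong) (simp_all add: distrib_left[symmetric])
  then show ?thesis unfolding filter by (simp only: sum.distrib)
qed

lemma dist_across_merge:
  fixes pos :: "nat \<Rightarrow> 'a::metric_space"
  assumes fin: "finite Su" "finite Sv" and dj: "Su \<inter> Sv = {}"
    and in_sets: "a \<in> Su" "b \<in> Sv" "x \<in> Su" "z \<in> Sv"
    and y_nonneg: "\<And>T. 0 \<le> y T" and y_empty: "y {} = 0"
    and dist_xa: "dist (pos x) (pos a) \<le> (\<Sum>T\<in>Pow Su. y T * outside_weight T x a)"
    and dist_zb: "dist (pos z) (pos b) \<le> (\<Sum>T\<in>Pow Sv. y T * outside_weight T z b)"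
    and dist_ab: "dist (pos a) (pos b) \<le> (\<Sum>T\<in>{T\<in>Pow Su. a \<in> T}. y T) + (\<Sum>T\<in>{T\<in>Pow Sv. b \<in> T}. y T)"
  shows "dist (pos x) (pos z) \<le> (\<Sum>T\<in>Pow (Su \<union> Sv). y T * outside_weight T x z)"
proof -
  have "z \<notin> Su" "x \<notin> Sv" using dj in_sets by auto
  note extend = sum_outside_weight_extend[OF fin(1) \<open>z \<notin> Su\<close>, of y x a]
    sum_outside_weight_extend[OF fin(2) \<open>x \<notin> Sv\<close>, of y z b]
  have "Pow Su \<inter> Pow Sv = {{}}" using dj by auto
  then have "(\<Sum>T\<in>Pow Su \<union> Pow Sv. y T * outside_weight T x z)
      = (\<Sum>T\<in>Pow Su. y T * outside_weight T x z) + (\<Sum>T\<in>Pow Sv. y T * outside_weight T z x)"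
    using sum_Un[of "Pow Su" "Pow Sv" "\<lambda>T. y T * outside_weight T x z"] fin y_empty
    by (simp add: outside_weight_commute)
  moreover have "(\<Sum>T\<in>Pow Su \<union> Pow Sv. y T * outside_weight T x z)
      \<le> (\<Sum>T\<in>Pow (Su \<union> Sv). y T * outside_weight T x z)"
    using fin y_nonneg outside_weight_nonneg by (intro sum_mono2) auto
  moreover have "dist (pos x) (pos z) \<le> dist (pos x) (pos a) + dist (pos a) (pos b) + dist (pos z) (pos b)"
    using dist_triangle[of "pos x" "pos z" "pos a"] dist_triangle2[of "pos a" "pos z" "pos b"] by linarith
  ultimately show ?thesis using dist_xa dist_zb dist_ab extend by linarith
qed

lemma dual_sum_eq_sum_Pow:
  "dual_sum n y u v = (\<Sum>T\<in>Pow {..<n}. if (u \<in> T) \<noteq> (v \<in> T) then y T else 0)"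
proof -
  have "{S. S \<subseteq> {..<n} \<and> (u \<in> S) \<noteq> (v \<in> S)} = {T\<in>Pow {..<n}. (u \<in> T) \<noteq> (v \<in> T)}"
    by auto
  then have "dual_sum n y u v = sum y {T\<in>Pow {..<n}. (u \<in> T) \<noteq> (v \<in> T)}"
    unfolding dual_sum_def by simp
  also have "\<dots> = (\<Sum>T\<in>Pow {..<n}. if (u \<in> T) \<noteq> (v \<in> T) then y T else 0)"
    by (rule sum.inter_filter) simp
  finally show ?thesis .
qed

lemma dual_sum_commute: "dual_sum n y u v = dual_sum n y v u"
  unfolding dual_sum_def by (rule sum.cong) auto

lemma sum_dual_sum_partner:
  "(\<Sum>u<n. dual_sum n y u (mt u))
     = (\<Sum>T\<in>Pow {..<n}. y T * card {u\<in>{..<n}. (u \<in> T) \<noteq> (mt u \<in> T)})"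
proof -
  have "(\<Sum>u<n. dual_sum n y u (mt u))
      = (\<Sum>T\<in>Pow {..<n}. \<Sum>u<n. if (u \<in> T) \<noteq> (mt u \<in> T) then y T else 0)"
    unfolding dual_sum_eq_sum_Pow by (rule sum.swap)
  also have "\<dots> = (\<Sum>T\<in>Pow {..<n}. y T * card {u\<in>{..<n}. (u \<in> T) \<noteq> (mt u \<in> T)})"
    by (simp add: sum.inter_filter[symmetric] mult.commute)
  finally show ?thesis .
qed

lemma matching_cost_double:
  fixes pos :: "nat \<Rightarrow> 'a::metric_space"
  assumes valid: "valid_solution n atime sg mt mtt"
  shows "2 * matching_cost n pos atime mt mtt
    = (\<Sum>u<n. dist (pos u) (pos (mt u)) + (mtt u - atime u) + (mtt (mt u) - atime (mt u)))"
proof -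
  have mt: "mt u < n" "mt u \<noteq> u" "mt (mt u) = u" if "u < n" for u
    using valid that unfolding valid_solution_def by blast+
  have "(\<Sum>u<n. dist (pos u) (pos (mt u)))
      = (\<Sum>u\<in>{u\<in>{..<n}. u < mt u}. dist (pos u) (pos (mt u)) + dist (pos (mt u)) (pos (mt (mt u))))"
    by (rule sum_fixfree_involution) (auto simp: mt)
  also have "\<dots> = 2 * (\<Sum>u\<in>{u. u < n \<and> u < mt u}. dist (pos u) (pos (mt u)))"
    by (simp add: sum_distrib_left dist_commute mt)
  finally have connection: "(\<Sum>u<n. dist (pos u) (pos (mt u)))
      = 2 * (\<Sum>u\<in>{u. u < n \<and> u < mt u}. dist (pos u) (pos (mt u)))" .
  have "bij_betw mt {..<n} {..<n}" by (rule bij_betw_byWitness[where f' = mt]) (auto simp: mt)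
  then have waiting: "(\<Sum>u<n. mtt (mt u) - atime (mt u)) = (\<Sum>u<n. mtt u - atime u)"
    by (rule sum.reindex_bij_betw)
  show ?thesis
    unfolding matching_cost_def sum.distrib connection waiting by simp
qed

locale gd_instance =
  fixes n :: nat and pos :: "nat \<Rightarrow> 'a::metric_space" and atime :: "nat \<Rightarrow> real"
    and sg :: "nat \<Rightarrow> int" and bip :: bool
  assumes sign_values: "\<And>u. u < n \<Longrightarrow> (if bip then sg u = 1 \<or> sg u = -1 else sg u = 0)"
begin

definition surplus :: "nat set \<Rightarrow> real" where
  "surplus T = (if bip then \<bar>\<Sum>u\<in>T. real_of_int (sg u)\<bar> else real (card T mod 2))"

lemma surplus_empty [simp]: "surplus {} = 0"
  by (simp add: surplus_def)

lemma surplus_le_card: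
  assumes "T \<subseteq> {..<n}"
  shows "surplus T \<le> card T"
proof (cases bip)
  case True
  have "\<bar>\<Sum>u\<in>T. real_of_int (sg u)\<bar> \<le> (\<Sum>u\<in>T. \<bar>real_of_int (sg u)\<bar>)"
    by (rule sum_abs)
  also have "\<dots> = (\<Sum>u\<in>T. 1)"
    using assms sign_values True by (intro sum.cong) force+
  finally show ?thesis unfolding surplus_def using True by simp
qed (unfold surplus_def, simp)

lemma surplus_diff_matched:
  assumes T: "T \<subseteq> {..<n}" and "M \<subseteq> T"
    and g: "\<And>u. u \<in> M \<Longrightarrow> g u \<in> M" "\<And>u. u \<in> M \<Longrightarrow> g (g u) = u" "\<And>u. u \<in> M \<Longrightarrow> g u \<noteq> u"
    and g_sign: "\<And>u. u \<in> M \<Longrightarrow> sg (g u) = - sg u"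
  shows "surplus T = surplus (T - M)"
proof -
  have fin: "finite T" "finite M" using T \<open>M \<subseteq> T\<close> by (auto intro: finite_subset)
  have T_split: "T = M \<union> (T - M)" "M \<inter> (T - M) = {}" using \<open>M \<subseteq> T\<close> by auto
  show ?thesis
  proof (cases bip)
    case True
    have "(\<Sum>u\<in>M. real_of_int (sg u)) = 0"
      by (rule sum_involution_eq_0[where h = g]) (simp_all add: g g_sign)
    then have "(\<Sum>u\<in>T. real_of_int (sg u)) = (\<Sum>u\<in>T - M. real_of_int (sg u))"
      using fin T_split sum.union_disjoint[of M "T - M"] by (metis add_0 finite_Diff)
    then show ?thesis unfolding surplus_def using True by simp
  next
    case False
    have "card M = 2 * card {u\<in>M. u < g u}"
      by (rule card_fixfree_involution) (use fin g in auto)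
    moreover have "card T = card M + card (T - M)"
      using fin \<open>M \<subseteq> T\<close> by (simp add: card_Diff_subset card_mono)
    ultimately have "card T mod 2 = card (T - M) mod 2" by presburger
    then show ?thesis unfolding surplus_def using False by simp
  qed
qed

lemma surplus_incompatible:
  assumes T: "T \<subseteq> {..<n}" and incompatible: "\<And>a b. a \<in> T \<Longrightarrow> b \<in> T \<Longrightarrow> a \<noteq> b \<Longrightarrow> sg a \<noteq> - sg b"
  shows "surplus T = card T"
proof -
  have sign: "if bip then sg u = 1 \<or> sg u = -1 else sg u = 0" if "u \<in> T" for u
    using that T sign_values by blast
  show ?thesis
  proof (cases bip)
    case True
    show ?thesis
    proof (cases "T = {}")
      case False
      then obtain a where a: "a \<in> T" by blast
      have "sg b = sg a" if "b \<in> T" for b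
      proof (cases "b = a")
        case False
        then show ?thesis using sign[OF a] sign[OF that] incompatible[OF a that] True by auto
      qed simp
      then have "(\<Sum>u\<in>T. real_of_int (sg u)) = card T * real_of_int (sg a)" by simp
      moreover have "\<bar>real_of_int (sg a)\<bar> = 1" using sign[OF a] True by auto
      ultimately show ?thesis unfolding surplus_def using True by (simp add: abs_mult)
    qed simp
  next
    case False
    have "a = b" if "a \<in> T" "b \<in> T" for a b
      using sign[OF that(1)] sign[OF that(2)] incompatible[OF that] False by auto
    moreover have "finite T" using T by (rule finite_subset) simp
    ultimately have "card T \<le> 1" by (simp add: card_le_Suc0_iff_eq)
    then show ?thesis unfolding surplus_def using False by simp
  qed
qed

lemma surplus_le_half_cut:
  assumes valid: "valid_solution n atime sg mt mtt" and T: "T \<subseteq> {..<n}"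
  shows "2 * surplus T \<le> card {u\<in>{..<n}. (u \<in> T) \<noteq> (mt u \<in> T)}"
proof -
  have mt: "mt u < n" "mt u \<noteq> u" "mt (mt u) = u" "sg (mt u) = - sg u" if "u < n" for u
    using valid that by (auto simp: valid_solution_def)
  define A where "A = {u\<in>T. mt u \<notin> T}"
  have A_lt: "\<And>u. u \<in> A \<Longrightarrow> u < n" using T unfolding A_def by auto
  have fin: "finite A" using A_lt by (meson finite_lessThan finite_subset lessThan_iff subsetI)
  have cut: "{u\<in>{..<n}. (u \<in> T) \<noteq> (mt u \<in> T)} = A \<union> mt ` A"
  proof
    show "{u\<in>{..<n}. (u \<in> T) \<noteq> (mt u \<in> T)} \<subseteq> A \<union> mt ` A"
    proof
      fix u assume u: "u \<in> {u\<in>{..<n}. (u \<in> T) \<noteq> (mt u \<in> T)}"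
      show "u \<in> A \<union> mt ` A"
      proof (cases "u \<in> T")
        case False
        then have "mt u \<in> A" "u = mt (mt u)" using u mt unfolding A_def by auto
        then show ?thesis by blast
      qed (use u in \<open>simp add: A_def\<close>)
    qed
    show "A \<union> mt ` A \<subseteq> {u\<in>{..<n}. (u \<in> T) \<noteq> (mt u \<in> T)}"
      using T mt unfolding A_def by auto
  qed
  have "inj_on mt A" by (rule inj_onI) (metis A_lt mt(3))
  moreover have "A \<inter> mt ` A = {}" using T mt(3) unfolding A_def by auto
  ultimately have "card {u\<in>{..<n}. (u \<in> T) \<noteq> (mt u \<in> T)} = 2 * card A"
    unfolding cut using fin by (simp add: card_Un_disjoint card_image)
  moreover have "surplus T = surplus A"
  proof -
    have "surplus T = surplus (T - (T - A))"
      by (rule surplus_diff_matched[where g = mt]) (use T mt in \<open>auto simp: A_def\<close>)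
    also have "T - (T - A) = A" unfolding A_def by auto
    finally show ?thesis .
  qed
  moreover have "surplus A \<le> card A" using T by (intro surplus_le_card) (auto simp: A_def)
  ultimately show ?thesis by simp
qed

lemma weak_duality:
  assumes valid: "valid_solution n atime sg mt mtt" and y_nonneg: "\<And>T. 0 \<le> y T"
    and feasible: "\<And>u v. u < n \<Longrightarrow> v < n \<Longrightarrow> u \<noteq> v \<Longrightarrow> sg u = - sg v \<Longrightarrow>
      dual_sum n y u v \<le> ecost pos atime u v"
  shows "(\<Sum>T\<in>Pow {..<n}. y T * surplus T) \<le> matching_cost n pos atime mt mtt"
proof -
  have mt: "mt u < n" "mt u \<noteq> u" "sg (mt u) = - sg u" "mtt (mt u) = mtt u" "atime u \<le> mtt u"
    if "u < n" for u
    using valid that unfolding valid_solution_def by blast+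
  have "2 * (\<Sum>T\<in>Pow {..<n}. y T * surplus T)
      \<le> (\<Sum>T\<in>Pow {..<n}. y T * card {u\<in>{..<n}. (u \<in> T) \<noteq> (mt u \<in> T)})"
    unfolding sum_distrib_left
  proof (rule sum_mono)
    fix T assume "T \<in> Pow {..<n}"
    then have "2 * surplus T \<le> card {u\<in>{..<n}. (u \<in> T) \<noteq> (mt u \<in> T)}"
      by (intro surplus_le_half_cut[OF valid]) auto
    from mult_left_mono[OF this y_nonneg[of T]]
    show "2 * (y T * surplus T) \<le> y T * card {u\<in>{..<n}. (u \<in> T) \<noteq> (mt u \<in> T)}"
      by (simp add: algebra_simps)
  qed
  also have "\<dots> = (\<Sum>u<n. dual_sum n y u (mt u))"
    by (rule sum_dual_sum_partner[symmetric])
  also have "\<dots> \<le> (\<Sum>u<n. dist (pos u) (pos (mt u)) + (mtt u - atime u) + (mtt (mt u) - atime (mt u)))"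
  proof (rule sum_mono)
    fix u assume "u \<in> {..<n}"
    then have u: "u < n" by simp
    have "dual_sum n y u (mt u) \<le> ecost pos atime u (mt u)"
      using feasible[OF u] mt[OF u] by simp
    also have "\<dots> \<le> dist (pos u) (pos (mt u)) + (mtt u - atime u) + (mtt (mt u) - atime (mt u))"
      using mt[OF u] mt[OF mt(1)[OF u]] unfolding ecost_def by auto
    finally show "dual_sum n y u (mt u)
        \<le> dist (pos u) (pos (mt u)) + (mtt u - atime u) + (mtt (mt u) - atime (mt u))" .
  qed
  also have "\<dots> = 2 * matching_cost n pos atime mt mtt"
    by (rule matching_cost_double[OF valid, symmetric])
  finally show ?thesis by simp
qed

lemma dual_le_Opt:
  assumes "valid_solution n atime sg mt mtt" and "\<And>T. 0 \<le> y T"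
    and "\<And>u v. u < n \<Longrightarrow> v < n \<Longrightarrow> u \<noteq> v \<Longrightarrow> sg u = - sg v \<Longrightarrow>
      dual_sum n y u v \<le> ecost pos atime u v"
  shows "(\<Sum>T\<in>Pow {..<n}. y T * surplus T) \<le> Opt n pos atime sg"
  unfolding Opt_def using assms by (intro cInf_greatest) (auto intro: weak_duality)

definition dual_value :: "gd_state \<Rightarrow> real" where
  "dual_value s = (\<Sum>T\<in>Pow {..<n}. yv s T * surplus T)"

definition waiting_cost :: "gd_state \<Rightarrow> real" where
  "waiting_cost s = (\<Sum>u\<in>{..<narr s} - fr s. mtm s u - atime u) + (\<Sum>u\<in>fr s. tm s - atime u)"

definition matched :: "gd_state \<Rightarrow> nat \<Rightarrow> bool" where
  "matched s u \<longleftrightarrow> mate s u < narr s \<and> mate s u \<notin> fr s \<and> mate s u \<noteq> u \<and> mate s (mate s u) = u \<and>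
     sg (mate s u) = - sg u \<and> mtm s (mate s u) = mtm s u \<and> atime u \<le> mtm s u \<and>
     (\<exists>S\<in>act s. u \<in> S \<and> mate s u \<in> S)"

lemma matchedI:
  assumes "mate s u < narr s" "mate s u \<notin> fr s" "mate s u \<noteq> u" "mate s (mate s u) = u"
    "sg (mate s u) = - sg u" "mtm s (mate s u) = mtm s u" "atime u \<le> mtm s u"
    "S \<in> act s" "u \<in> S" "mate s u \<in> S"
  shows "matched s u"
  using assms unfolding matched_def by blast

definition free_incompatible :: "gd_state \<Rightarrow> nat set \<Rightarrow> bool" where
  "free_incompatible s S \<longleftrightarrow> (\<forall>a\<in>S \<inter> fr s. \<forall>b\<in>S \<inter> fr s. a \<noteq> b \<longrightarrow> sg a \<noteq> - sg b)"

end

text \<open>By \<open>dual_load\<close>, the duals of the sets containing a request never exceed its waiting time;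
  this keeps the dual constraints of a newly arriving request satisfied.\<close>
locale gd_invariant = gd_instance +
  fixes s :: gd_state
  assumes arrived_le: "narr s \<le> n"
    and arrived_before_now: "\<And>u. u < narr s \<Longrightarrow> atime u \<le> tm s"
    and free_arrived: "fr s \<subseteq> {..<narr s}"
    and active_partition: "partition_on {..<narr s} (act s)"
    and dual_nonneg: "\<And>T. 0 \<le> yv s T"
    and dual_support_active: "\<And>T. yv s T \<noteq> 0 \<Longrightarrow> \<exists>R\<in>act s. T \<subseteq> R"
    and dual_support_surplus: "\<And>T. yv s T \<noteq> 0 \<Longrightarrow> 1 \<le> surplus T"
    and matched_unless_free: "\<And>u. u < narr s \<Longrightarrow> u \<notin> fr s \<Longrightarrow> matched s u"
    and active_free_incompatible: "\<And>S. S \<in> act s \<Longrightarrow> free_incompatible s S"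
    and dual_load: "\<And>u. u < narr s \<Longrightarrow> (\<Sum>T\<in>{T\<in>Pow {..<n}. u \<in> T}. yv s T) \<le> tm s - atime u"
    and dual_feasible: "\<And>u v. u < narr s \<Longrightarrow> v < narr s \<Longrightarrow> u \<noteq> v \<Longrightarrow> sg u = - sg v \<Longrightarrow>
      dual_sum n (yv s) u v \<le> ecost pos atime u v"
    and waiting_cost_eq_dual: "waiting_cost s = dual_value s"
    and active_radius: "\<And>S u v. S \<in> act s \<Longrightarrow> u \<in> S \<Longrightarrow> v \<in> S \<Longrightarrow>
      dist (pos u) (pos v) \<le> (\<Sum>T\<in>Pow S. yv s T * outside_weight T u v)"

context gd_invariant
begin

lemma active_subset: "S \<in> act s \<Longrightarrow> S \<subseteq> {..<narr s}"
  using partition_onD1[OF active_partition] by blast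

lemma active_cover: "u < narr s \<Longrightarrow> \<exists>S\<in>act s. u \<in> S"
  using partition_onD1[OF active_partition] by blast

lemma active_unique: "S \<in> act s \<Longrightarrow> S' \<in> act s \<Longrightarrow> u \<in> S \<Longrightarrow> u \<in> S' \<Longrightarrow> S = S'"
  using disjointD[OF partition_onD2[OF active_partition]] by blast

lemma finite_active: "finite (act s)"
  using finite_elements[OF _ active_partition] by simp

lemma finite_active_set: "S \<in> act s \<Longrightarrow> finite S"
  using active_subset finite_subset by blast

lemma dual_empty: "yv s {} = 0"
  using dual_support_surplus[of "{}"] by force

lemma surplus_active:
  assumes S: "S \<in> act s"
  shows "surplus S = card (S \<inter> fr s)"
proof -
  have S_lt: "S \<subseteq> {..<n}" using active_subset[OF S] arrived_le by auto
  have mate: "mate s u \<in> S - fr s" "mate s (mate s u) = u" "mate s u \<noteq> u" "sg (mate s u) = - sg u"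
    if "u \<in> S - fr s" for u
  proof -
    have "matched s u" using that active_subset[OF S] matched_unless_free by blast
    then obtain S' where "S' \<in> act s" "u \<in> S'" "mate s u \<in> S'"
      and "mate s u \<notin> fr s" "mate s (mate s u) = u" "mate s u \<noteq> u" "sg (mate s u) = - sg u"
      unfolding matched_def by blast
    moreover have "S' = S" using active_unique \<open>S' \<in> act s\<close> S \<open>u \<in> S'\<close> that by blast
    ultimately show "mate s u \<in> S - fr s" "mate s (mate s u) = u" "mate s u \<noteq> u" "sg (mate s u) = - sg u"
      by blast+
  qed
  have "surplus S = surplus (S - (S - fr s))"
    by (rule surplus_diff_matched[OF S_lt, where g = "mate s"]) (use mate in auto)
  also have "S - (S - fr s) = S \<inter> fr s" by blast
  also have "surplus (S \<inter> fr s) = card (S \<inter> fr s)"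
    using S_lt active_free_incompatible[OF S] by (intro surplus_incompatible) (auto simp: free_incompatible_def)
  finally show ?thesis .
qed

lemma card_free_eq_sum_active: "card (fr s) = (\<Sum>S\<in>act s. card (S \<inter> fr s))"
proof -
  have "fr s = (\<Union>S\<in>act s. S \<inter> fr s)" using free_arrived active_cover by blast
  moreover have "card (\<Union>S\<in>act s. S \<inter> fr s) = (\<Sum>S\<in>act s. card (S \<inter> fr s))"
    using finite_active finite_active_set active_unique by (intro card_UN_disjoint) auto
  ultimately show ?thesis by simp
qed

lemma dual_feasible_with_arrival:
  assumes arrival: "atime (narr s) = tm s"
    and uv: "u \<le> narr s" "v \<le> narr s" "u \<noteq> v" "sg u = - sg v"
  shows "dual_sum n (yv s) u v \<le> ecost pos atime u v"
proof -
  have new_request: "dual_sum n (yv s) (narr s) w \<le> ecost pos atime (narr s) w" if "w < narr s" for w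
  proof -
    have "dual_sum n (yv s) (narr s) w \<le> (\<Sum>T\<in>{T\<in>Pow {..<n}. w \<in> T}. yv s T)"
      unfolding dual_sum_def
    proof (rule sum_mono_support)
      fix T assume T: "T \<in> {S. S \<subseteq> {..<n} \<and> (narr s \<in> S) \<noteq> (w \<in> S)}" and "yv s T \<noteq> 0"
      then obtain R where "R \<in> act s" "T \<subseteq> R" using dual_support_active by blast
      then have "narr s \<notin> T" using active_subset by fastforce
      then show "T \<in> {T\<in>Pow {..<n}. w \<in> T}" using T by auto
    qed (simp_all add: dual_nonneg)
    also have "\<dots> \<le> tm s - atime w" using dual_load[OF that] .
    also have "\<dots> \<le> ecost pos atime (narr s) w"
      unfolding ecost_def using arrival zero_le_dist[of "pos (narr s)" "pos w"] by linarith
    finally show ?thesis .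
  qed
  consider "u < narr s" "v < narr s" | "u = narr s" "v < narr s" | "v = narr s" "u < narr s"
    using uv by linarith
  then show ?thesis
  proof cases
    case 1
    then show ?thesis using dual_feasible uv by simp
  next
    case 2
    then show ?thesis using new_request by simp
  next
    case 3
    then show ?thesis using new_request[of u] dual_sum_commute[of n "yv s" u v]
      by (simp add: ecost_def dist_commute abs_minus_commute)
  qed
qed

lemma arrive_invariant:
  assumes "gd_arrive n atime s s'"
  shows "gd_invariant n pos atime sg bip s'"
proof -
  define u0 where "u0 = narr s"
  have u0: "u0 < n" "atime u0 = tm s"
    and s': "s' = s\<lparr>narr := Suc u0, act := insert {u0} (act s), fr := insert u0 (fr s)\<rparr>"
    using assms unfolding gd_arrive_def u0_def by auto
  have [simp]: "narr s' = Suc u0" "act s' = insert {u0} (act s)" "fr s' = insert u0 (fr s)"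
    "tm s' = tm s" "yv s' = yv s" "mate s' = mate s" "mtm s' = mtm s"
    using s' by simp_all
  have new: "u0 \<notin> S" if "S \<in> act s" for S using active_subset[OF that] by (auto simp: u0_def)
  have new_free: "u0 \<notin> fr s" using free_arrived by (auto simp: u0_def)
  have arrived: "{..<Suc u0} - {u0} = {..<u0}" "{..<Suc u0} - insert u0 (fr s) = {..<u0} - fr s" by auto
  have finite_free: "finite (fr s)" using free_arrived finite_subset by blast
  show ?thesis
  proof unfold_locales
    show "narr s' \<le> n" using u0 by simp
    show "atime u \<le> tm s'" if "u < narr s'" for u
      using that arrived_before_now u0 by (auto simp: u0_def less_Suc_eq)
    show "fr s' \<subseteq> {..<narr s'}" using free_arrived by (auto simp: u0_def)
    have "partition_on {..<Suc u0} (insert {u0} (act s))"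
      using active_partition new by (subst partition_on_insert) (auto simp: disjnt_def arrived u0_def[symmetric])
    then show "partition_on {..<narr s'} (act s')" by simp
    show "0 \<le> yv s' T" for T using dual_nonneg by simp
    show "\<exists>R\<in>act s'. T \<subseteq> R" if "yv s' T \<noteq> 0" for T using dual_support_active that by auto
    show "1 \<le> surplus T" if "yv s' T \<noteq> 0" for T using dual_support_surplus that by simp
    show "matched s' u" if "u < narr s'" "u \<notin> fr s'" for u
    proof -
      have "matched s u" using that matched_unless_free by (simp add: u0_def less_Suc_eq)
      then show ?thesis using u0_def unfolding matched_def by auto
    qed
    show "free_incompatible s' S" if "S \<in> act s'" for S
    proof (cases "S = {u0}")
      case False
      then have "S \<in> act s" using that by simp
      then show ?thesis using active_free_incompatible new by (auto simp: free_incompatible_def)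
    qed (simp add: free_incompatible_def)
    show "(\<Sum>T\<in>{T\<in>Pow {..<n}. u \<in> T}. yv s' T) \<le> tm s' - atime u" if "u < narr s'" for u
    proof (cases "u = u0")
      case True
      have "yv s T = 0" if "u0 \<in> T" for T using that dual_support_active new by blast
      then show ?thesis using True u0 by simp
    qed (use that dual_load in \<open>simp add: u0_def\<close>)
    show "dual_sum n (yv s') u v \<le> ecost pos atime u v"
      if "u < narr s'" "v < narr s'" "u \<noteq> v" "sg u = - sg v" for u v
    proof -
      have "u \<le> narr s" "v \<le> narr s" using that by (simp_all add: u0_def)
      then show ?thesis using dual_feasible_with_arrival u0(2) that by (simp add: u0_def)
    qed
    show "waiting_cost s' = dual_value s'"
      using waiting_cost_eq_dual new_free finite_free u0(2)
      by (simp add: waiting_cost_def dual_value_def arrived flip: u0_def)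
    show "dist (pos u) (pos v) \<le> (\<Sum>T\<in>Pow S. yv s' T * outside_weight T u v)"
      if "S \<in> act s'" "u \<in> S" "v \<in> S" for S u v
    proof (cases "S = {u0}")
      case True
      then show ?thesis using that dual_nonneg outside_weight_nonneg by (simp add: sum_nonneg)
    qed (use that active_radius in simp)
  qed
qed

lemma dual_load_grown:
  assumes "tm s \<le> t'" "u < narr s"
  shows "(\<Sum>T\<in>{T\<in>Pow {..<n}. u \<in> T}. grown_duals s t' T) \<le> t' - atime u"
proof -
  obtain R where R: "R \<in> act s" "u \<in> R" using active_cover assms(2) by blast
  have "(\<Sum>T\<in>{T\<in>Pow {..<n}. u \<in> T}. grown_duals s t' T - yv s T) \<le> (\<Sum>T\<in>{R}. grown_duals s t' T - yv s T)"
  proof (rule sum_mono_support)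
    fix T assume "T \<in> {T\<in>Pow {..<n}. u \<in> T}" "grown_duals s t' T - yv s T \<noteq> 0"
    then have "T \<in> act s" "u \<in> T" by (auto simp: grown_duals_def split: if_splits)
    then show "T \<in> {R}" using active_unique R by blast
  qed (auto simp: grown_duals_def assms(1))
  also have "\<dots> \<le> t' - tm s" using assms(1) by (simp add: grown_duals_def)
  finally show ?thesis using dual_load[OF assms(2)] by (simp add: sum_subtractf)
qed

lemma dual_sum_grown_same_active:
  assumes "S \<in> act s" "u \<in> S" "v \<in> S"
  shows "dual_sum n (grown_duals s t') u v = dual_sum n (yv s) u v"
  unfolding dual_sum_def
proof (rule sum.cong)
  fix T assume "T \<in> {T. T \<subseteq> {..<n} \<and> (u \<in> T) \<noteq> (v \<in> T)}"
  then have "T \<notin> act s" using active_unique assms by blast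
  then show "grown_duals s t' T = yv s T" by (simp add: grown_duals_def)
qed simp

lemma dual_value_grown:
  "(\<Sum>T\<in>Pow {..<n}. grown_duals s t' T * surplus T) = dual_value s + (t' - tm s) * card (fr s)"
proof -
  define G where "G = {S\<in>act s. S \<inter> fr s \<noteq> {}}"
  have G_Pow: "G \<subseteq> Pow {..<n}" using active_subset arrived_le unfolding G_def by fastforce
  have "(\<Sum>T\<in>Pow {..<n}. grown_duals s t' T * surplus T)
      = dual_value s + (\<Sum>T\<in>Pow {..<n}. if T \<in> G then (t' - tm s) * surplus T else 0)"
    unfolding dual_value_def sum.distrib[symmetric] by (rule sum.cong) (auto simp: grown_duals_def G_def algebra_simps)
  also have "(\<Sum>T\<in>Pow {..<n}. if T \<in> G then (t' - tm s) * surplus T else 0)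
      = (\<Sum>T\<in>{T\<in>Pow {..<n}. T \<in> G}. (t' - tm s) * surplus T)"
    by (rule sum.inter_filter[symmetric]) simp
  also have "\<dots> = (\<Sum>T\<in>G. (t' - tm s) * surplus T)"
    using G_Pow by (simp only: Collect_conj_eq Collect_mem_eq Int_absorb1)
  also have "\<dots> = (\<Sum>T\<in>G. (t' - tm s) * card (T \<inter> fr s))"
    using surplus_active by (intro sum.cong) (auto simp: G_def)
  also have "\<dots> = (\<Sum>T\<in>act s. (t' - tm s) * card (T \<inter> fr s))"
    using finite_active by (intro sum.mono_neutral_left) (auto simp: G_def)
  also have "\<dots> = (t' - tm s) * card (fr s)"
    by (simp add: card_free_eq_sum_active sum_distrib_left)
  finally show ?thesis .
qed

lemma waiting_cost_advance:
  "waiting_cost (s\<lparr>tm := t', yv := y\<rparr>) = waiting_cost s + (t' - tm s) * card (fr s)"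
proof -
  have "(\<Sum>u\<in>fr s. t' - atime u) - (\<Sum>u\<in>fr s. tm s - atime u) = (\<Sum>u\<in>fr s. t' - tm s)"
    by (simp add: sum_subtractf[symmetric])
  then show ?thesis unfolding waiting_cost_def by (simp add: algebra_simps)
qed

lemma advance_invariant:
  assumes "gd_advance n pos atime sg s s'"
  shows "gd_invariant n pos atime sg bip s'"
proof -
  obtain t' where t': "tm s < t'"
    and within_cost: "\<And>u v. cross_edge sg s u v \<Longrightarrow> dual_sum n (grown_duals s t') u v \<le> ecost pos atime u v"
    and s': "s' = s\<lparr>tm := t', yv := grown_duals s t'\<rparr>"
    using assms unfolding gd_advance_def by blast
  have [simp]: "narr s' = narr s" "act s' = act s" "fr s' = fr s" "tm s' = t'" "yv s' = grown_duals s t'"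
    "mate s' = mate s" "mtm s' = mtm s"
    using s' by simp_all
  have growth: "yv s T \<le> grown_duals s t' T" for T using t' by (simp add: grown_duals_def)
  show ?thesis
  proof unfold_locales
    show "narr s' \<le> n" using arrived_le by simp
    show "atime u \<le> tm s'" if "u < narr s'" for u using arrived_before_now[of u] that t' by simp
    show "fr s' \<subseteq> {..<narr s'}" using free_arrived by simp
    show "partition_on {..<narr s'} (act s')" using active_partition by simp
    show "0 \<le> yv s' T" for T using dual_nonneg[of T] growth[of T] by simp
    show "\<exists>R\<in>act s'. T \<subseteq> R" if "yv s' T \<noteq> 0" for T
      using that dual_support_active[of T] by (auto simp: grown_duals_def split: if_splits)
    show "1 \<le> surplus T" if "yv s' T \<noteq> 0" for T
    proof (cases "T \<in> act s \<and> T \<inter> fr s \<noteq> {}")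
      case True
      then have "card (T \<inter> fr s) \<noteq> 0" using finite_active_set by auto
      then show ?thesis using surplus_active True by simp
    qed (use that dual_support_surplus[of T] in \<open>auto simp: grown_duals_def\<close>)
    show "matched s' u" if "u < narr s'" "u \<notin> fr s'" for u
      using matched_unless_free[of u] that by (simp add: matched_def)
    show "free_incompatible s' S" if "S \<in> act s'" for S
      using active_free_incompatible[of S] that by (simp add: free_incompatible_def)
    show "(\<Sum>T\<in>{T\<in>Pow {..<n}. u \<in> T}. yv s' T) \<le> tm s' - atime u" if "u < narr s'" for u
      using dual_load_grown t' that by simp
    show "dual_sum n (yv s') u v \<le> ecost pos atime u v"
      if uv: "u < narr s'" "v < narr s'" "u \<noteq> v" "sg u = - sg v" for u v
    proof (cases "cross_edge sg s u v")
      case False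
      obtain S where S: "S \<in> act s" "u \<in> S" using active_cover uv by auto
      obtain S' where S': "S' \<in> act s" "v \<in> S'" using active_cover uv by auto
      have "u < narr s" "v < narr s" using uv by simp_all
      then have "S = S'" using False uv S S' unfolding cross_edge_def by blast
      then show ?thesis using dual_sum_grown_same_active[OF S] S' dual_feasible uv by simp
    qed (use within_cost in simp)
    have "waiting_cost s' = waiting_cost s + (t' - tm s) * card (fr s)"
      unfolding s' by (rule waiting_cost_advance)
    moreover have "dual_value s' = dual_value s + (t' - tm s) * card (fr s)"
      using dual_value_grown[of t'] by (simp add: dual_value_def)
    ultimately show "waiting_cost s' = dual_value s'" using waiting_cost_eq_dual by simp
    show "dist (pos u) (pos v) \<le> (\<Sum>T\<in>Pow S. yv s' T * outside_weight T u v)"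
      if "S \<in> act s'" "u \<in> S" "v \<in> S" for S u v
    proof -
      have "dist (pos u) (pos v) \<le> (\<Sum>T\<in>Pow S. yv s T * outside_weight T u v)"
        using active_radius[of S u v] that by simp
      also have "\<dots> \<le> (\<Sum>T\<in>Pow S. yv s' T * outside_weight T u v)"
        using growth outside_weight_nonneg by (simp add: sum_mono mult_right_mono)
      finally show ?thesis .
    qed
  qed
qed

lemma waiting_cost_unchanged_by_matching:
  assumes "narr s' = narr s" "tm s' = tm s" "fr s' \<subseteq> fr s"
    and "\<And>w. w \<in> fr s - fr s' \<Longrightarrow> mtm s' w = tm s"
    and "\<And>w. w \<notin> fr s - fr s' \<Longrightarrow> mtm s' w = mtm s w"
  shows "waiting_cost s' = waiting_cost s"
proof -
  define R where "R = fr s - fr s'"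
  have fin: "finite (fr s)" "finite R" "finite ({..<narr s} - fr s)"
    using free_arrived finite_subset unfolding R_def by auto
  have "{..<narr s} - fr s' = ({..<narr s} - fr s) \<union> R" "fr s = fr s' \<union> R"
    using free_arrived assms(3) unfolding R_def by auto
  moreover have "({..<narr s} - fr s) \<inter> R = {}" "fr s' \<inter> R = {}" unfolding R_def by auto
  moreover have "(\<Sum>u\<in>{..<narr s} - fr s. mtm s' u - atime u) = (\<Sum>u\<in>{..<narr s} - fr s. mtm s u - atime u)"
    using assms(5) unfolding R_def by (intro sum.cong) auto
  moreover have "(\<Sum>u\<in>R. mtm s' u - atime u) = (\<Sum>u\<in>R. tm s - atime u)"
    using assms(4) unfolding R_def by (intro sum.cong) auto
  ultimately show ?thesis
    using fin assms(1,2) finite_subset[OF assms(3) fin(1)]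
    by (simp add: waiting_cost_def sum.union_disjoint)
qed

lemma dual_total_le_dual_value: "(\<Sum>T\<in>Pow {..<n}. yv s T) \<le> dual_value s"
  unfolding dual_value_def
proof (rule sum_mono)
  fix T
  show "yv s T \<le> yv s T * surplus T"
    using dual_support_surplus[of T] dual_nonneg[of T] mult_left_mono[of 1 "surplus T" "yv s T"]
    by (cases "yv s T = 0") auto
qed

lemma dist_active_le_dual_value:
  assumes "S \<in> act s" "u \<in> S" "v \<in> S"
  shows "dist (pos u) (pos v) \<le> 2 * dual_value s"
proof -
  have "dist (pos u) (pos v) \<le> (\<Sum>T\<in>Pow S. yv s T * outside_weight T u v)"
    by (rule active_radius[OF assms])
  also have "\<dots> \<le> (\<Sum>T\<in>Pow S. 2 * yv s T)"
    using dual_nonneg outside_weight_le_2 by (intro sum_mono) (simp add: mult.commute mult_left_mono)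
  also have "\<dots> \<le> (\<Sum>T\<in>Pow {..<n}. 2 * yv s T)"
    using active_subset[OF assms(1)] arrived_le dual_nonneg by (intro sum_mono2) auto
  also have "\<dots> \<le> 2 * dual_value s"
    using dual_total_le_dual_value by (simp add: sum_distrib_left[symmetric])
  finally show ?thesis .
qed

lemma final_cost_bound:
  assumes arrived: "narr s = n" and no_free: "fr s = {}" and "n = 2 * m"
  shows "matching_cost n pos atime (mate s) (mtm s) \<le> (2 * real m + 1) * Opt n pos atime sg"
proof -
  have matched: "matched s u" if "u < n" for u using matched_unless_free that arrived no_free by simp
  then have valid: "valid_solution n atime sg (mate s) (mtm s)"
    using arrived unfolding valid_solution_def matched_def by auto
  define P where "P = {u. u < n \<and> u < mate s u}"
  have "card {..<n} = 2 * card {u\<in>{..<n}. u < mate s u}"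
    by (rule card_fixfree_involution) (use matched arrived in \<open>auto simp: matched_def\<close>)
  then have card_P: "card P = m" using \<open>n = 2 * m\<close> unfolding P_def by simp
  have connection: "(\<Sum>u\<in>P. dist (pos u) (pos (mate s u))) \<le> (\<Sum>u\<in>P. 2 * dual_value s)"
  proof (rule sum_mono)
    fix u assume "u \<in> P"
    then obtain S where "S \<in> act s" "u \<in> S" "mate s u \<in> S" using matched unfolding P_def matched_def by blast
    then show "dist (pos u) (pos (mate s u)) \<le> 2 * dual_value s" by (rule dist_active_le_dual_value)
  qed
  have "matching_cost n pos atime (mate s) (mtm s) = (\<Sum>u\<in>P. dist (pos u) (pos (mate s u))) + dual_value s"
    using waiting_cost_eq_dual arrived no_free unfolding matching_cost_def waiting_cost_def P_def by simp
  also have "\<dots> \<le> (2 * real m + 1) * dual_value s"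
    using connection card_P by (simp add: algebra_simps)
  also have "\<dots> \<le> (2 * real m + 1) * Opt n pos atime sg"
    unfolding dual_value_def using valid dual_nonneg dual_feasible arrived
    by (intro mult_left_mono dual_le_Opt) auto
  finally show ?thesis .
qed

end

locale gd_merge_step = gd_invariant +
  fixes s' :: gd_state and a b :: nat and Su Sv :: "nat set"
  assumes Su: "Su \<in> act s" and Sv: "Sv \<in> act s" and sets_distinct: "Su \<noteq> Sv"
    and in_sets: "a \<in> Su" "b \<in> Sv"
    and tight: "dual_sum n (yv s) a b = ecost pos atime a b"
    and unchanged: "tm s' = tm s" "narr s' = narr s" "yv s' = yv s"
    and merged_act: "act s' = insert (Su \<union> Sv) (act s - {Su, Sv})"
    and fr_sub: "fr s' \<subseteq> fr s" and newly_matched_merged: "fr s - fr s' \<subseteq> Su \<union> Sv"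
    and newly_matched: "\<And>w. w \<in> fr s - fr s' \<Longrightarrow> mate s' w \<in> fr s - fr s' \<and> mate s' w \<noteq> w \<and>
      mate s' (mate s' w) = w \<and> sg (mate s' w) = - sg w \<and> mtm s' w = tm s"
    and others_kept: "\<And>w. w \<notin> fr s - fr s' \<Longrightarrow> mate s' w = mate s w \<and> mtm s' w = mtm s w"
    and no_free_pair: "\<And>x y. x \<in> fr s' \<inter> (Su \<union> Sv) \<Longrightarrow> y \<in> fr s' \<inter> (Su \<union> Sv) \<Longrightarrow> x \<noteq> y \<Longrightarrow>
      sg x \<noteq> - sg y"
begin

lemma sets_disjoint: "Su \<inter> Sv = {}"
  using active_unique Su Sv sets_distinct by blast

lemma merged_refines: "refines {..<narr s} (act s) (act s')"
  unfolding merged_act by (rule refines_merge[OF active_partition Su Sv sets_distinct])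

lemma merged_active: "Su \<union> Sv \<in> act s'"
  by (simp add: merged_act)

lemma coarsened_active: "Q \<in> act s \<Longrightarrow> \<exists>R\<in>act s'. Q \<subseteq> R"
  using merged_refines unfolding refines_def by blast

lemma other_active: "S \<in> act s' \<Longrightarrow> S \<noteq> Su \<union> Sv \<Longrightarrow> S \<in> act s \<and> S \<inter> (Su \<union> Sv) = {}"
  using active_unique Su Sv unfolding merged_act by blast

lemma dist_tight_edge:
  "dist (pos a) (pos b) \<le> (\<Sum>T\<in>{T\<in>Pow Su. a \<in> T}. yv s T) + (\<Sum>T\<in>{T\<in>Pow Sv. b \<in> T}. yv s T)"
proof -
  have fin: "finite Su" "finite Sv" using finite_active_set Su Sv by auto
  have "dist (pos a) (pos b) \<le> dual_sum n (yv s) a b" using tight by (simp add: ecost_def)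
  also have "\<dots> \<le> (\<Sum>T\<in>{T\<in>Pow Su. a \<in> T} \<union> {T\<in>Pow Sv. b \<in> T}. yv s T)"
    unfolding dual_sum_def
  proof (rule sum_mono_support)
    fix T assume T: "T \<in> {S. S \<subseteq> {..<n} \<and> (a \<in> S) \<noteq> (b \<in> S)}" and "yv s T \<noteq> 0"
    then obtain R where R: "R \<in> act s" "T \<subseteq> R" using dual_support_active by blast
    have "R = Su" if "a \<in> T" using active_unique[OF R(1) Su] R(2) in_sets that by blast
    moreover have "R = Sv" if "b \<in> T" using active_unique[OF R(1) Sv] R(2) in_sets that by blast
    ultimately show "T \<in> {T\<in>Pow Su. a \<in> T} \<union> {T\<in>Pow Sv. b \<in> T}" using T R(2) by auto
  qed (use fin dual_nonneg in auto)
  also have "\<dots> = (\<Sum>T\<in>{T\<in>Pow Su. a \<in> T}. yv s T) + (\<Sum>T\<in>{T\<in>Pow Sv. b \<in> T}. yv s T)"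
    using fin sets_disjoint in_sets by (intro sum.union_disjoint) auto
  finally show ?thesis .
qed

lemma merged_radius:
  assumes "x \<in> Su \<union> Sv" "z \<in> Su \<union> Sv"
  shows "dist (pos x) (pos z) \<le> (\<Sum>T\<in>Pow (Su \<union> Sv). yv s T * outside_weight T x z)"
proof -
  have fin: "finite Su" "finite Sv" using finite_active_set Su Sv by auto
  have across: "dist (pos x) (pos z) \<le> (\<Sum>T\<in>Pow (Su \<union> Sv). yv s T * outside_weight T x z)"
    if "x \<in> Su" "z \<in> Sv" for x z
    using fin sets_disjoint in_sets that dual_nonneg dual_empty
      active_radius[OF Su that(1) in_sets(1)] active_radius[OF Sv that(2) in_sets(2)] dist_tight_edge
    by (rule dist_across_merge)
  have within: "(\<Sum>T\<in>Pow S. yv s T * outside_weight T x z) \<le> (\<Sum>T\<in>Pow (Su \<union> Sv). yv s T * outside_weight T x z)"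
    if "S \<subseteq> Su \<union> Sv" for S
    using that fin dual_nonneg outside_weight_nonneg by (intro sum_mono2) auto
  consider "x \<in> Su" "z \<in> Su" | "x \<in> Sv" "z \<in> Sv" | "x \<in> Su" "z \<in> Sv" | "x \<in> Sv" "z \<in> Su"
    using assms by blast
  then show ?thesis
  proof cases
    case 1
    then show ?thesis using active_radius[OF Su] within[of Su] by fastforce
  next
    case 2
    then show ?thesis using active_radius[OF Sv] within[of Sv] by fastforce
  next
    case 3
    then show ?thesis by (rule across)
  next
    case 4
    then show ?thesis using across[of z x] by (simp add: dist_commute outside_weight_commute)
  qed
qed

lemma matched_after_merge:
  assumes w: "w < narr s'" "w \<notin> fr s'"
  shows "matched s' w"
proof (cases "w \<in> fr s - fr s'")
  case True
  have mate: "mate s' w \<in> fr s - fr s'" "mate s' w \<noteq> w" "mate s' (mate s' w) = w"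
    "sg (mate s' w) = - sg w" "mtm s' w = tm s"
    using newly_matched[OF True] by simp_all
  have same_time: "mtm s' (mate s' w) = mtm s' w" using newly_matched[OF mate(1)] mate(5) by simp
  have arrived: "mate s' w < narr s'" "mate s' w \<notin> fr s'" using mate(1) free_arrived unchanged(2) by auto
  have waited: "atime w \<le> mtm s' w" using arrived_before_now w mate(5) unchanged by simp
  have "w \<in> Su \<union> Sv" "mate s' w \<in> Su \<union> Sv" using True mate(1) newly_matched_merged by blast+
  then show ?thesis by (rule matchedI[OF arrived mate(2-4) same_time waited merged_active])
next
  case False
  then have "w \<notin> fr s" using w by blast
  then have old: "matched s w" using matched_unless_free w unchanged by simp
  then have "mate s w \<notin> fr s" unfolding matched_def by blast
  then have kept: "mate s' w = mate s w" "mtm s' w = mtm s w"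
    "mate s' (mate s w) = mate s (mate s w)" "mtm s' (mate s w) = mtm s (mate s w)"
    using others_kept False by blast+
  obtain Q where "Q \<in> act s" "w \<in> Q" "mate s w \<in> Q" using old unfolding matched_def by blast
  then obtain R where "R \<in> act s'" "w \<in> R" "mate s w \<in> R" using coarsened_active by blast
  moreover have "mate s w \<notin> fr s'" using \<open>mate s w \<notin> fr s\<close> fr_sub by blast
  moreover have "mate s w < narr s" "mate s w \<noteq> w" "mate s (mate s w) = w" "sg (mate s w) = - sg w"
    "mtm s (mate s w) = mtm s w" "atime w \<le> mtm s w"
    using old unfolding matched_def by blast+
  ultimately show ?thesis unfolding matched_def kept unchanged(2) by blast
qed

lemma free_incompatible_after_merge:
  assumes "S \<in> act s'"
  shows "free_incompatible s' S"
proof (cases "S = Su \<union> Sv")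
  case True
  then show ?thesis using no_free_pair unfolding free_incompatible_def by blast
next
  case False
  then have "S \<in> act s" "S \<inter> (Su \<union> Sv) = {}" using other_active assms by blast+
  moreover from this have "S \<inter> fr s' = S \<inter> fr s" using fr_sub newly_matched_merged by blast
  ultimately show ?thesis using active_free_incompatible unfolding free_incompatible_def by simp
qed

lemma gd_invariant_after_merge: "gd_invariant n pos atime sg bip s'"
proof unfold_locales
  show "narr s' \<le> n" using arrived_le unchanged by simp
  show "atime u \<le> tm s'" if "u < narr s'" for u using that arrived_before_now unchanged by simp
  show "fr s' \<subseteq> {..<narr s'}" using free_arrived fr_sub unchanged by auto
  show "partition_on {..<narr s'} (act s')" using merged_refines unchanged by (simp add: refines_def)
  show "0 \<le> yv s' T" for T using dual_nonneg unchanged by simp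
  show "\<exists>R\<in>act s'. T \<subseteq> R" if nonzero: "yv s' T \<noteq> 0" for T
  proof -
    obtain Q where "Q \<in> act s" "T \<subseteq> Q" using dual_support_active nonzero unchanged by auto
    moreover obtain R where "R \<in> act s'" "Q \<subseteq> R" using coarsened_active[OF \<open>Q \<in> act s\<close>] by blast
    ultimately show ?thesis by blast
  qed
  show "1 \<le> surplus T" if "yv s' T \<noteq> 0" for T using that dual_support_surplus unchanged by simp
  show "matched s' u" if "u < narr s'" "u \<notin> fr s'" for u using that by (rule matched_after_merge)
  show "free_incompatible s' S" if "S \<in> act s'" for S using that by (rule free_incompatible_after_merge)
  show "(\<Sum>T\<in>{T\<in>Pow {..<n}. u \<in> T}. yv s' T) \<le> tm s' - atime u" if "u < narr s'" for u
    using that dual_load unchanged by simp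
  show "dual_sum n (yv s') u v \<le> ecost pos atime u v"
    if "u < narr s'" "v < narr s'" "u \<noteq> v" "sg u = - sg v" for u v
    using that dual_feasible unchanged by simp
  have "waiting_cost s' = waiting_cost s"
  proof (rule waiting_cost_unchanged_by_matching)
    show "mtm s' w = tm s" if "w \<in> fr s - fr s'" for w using newly_matched[OF that] by simp
    show "mtm s' w = mtm s w" if "w \<notin> fr s - fr s'" for w using others_kept[OF that] by simp
  qed (use unchanged fr_sub in simp_all)
  then show "waiting_cost s' = dual_value s'"
    using waiting_cost_eq_dual unchanged by (simp add: dual_value_def)
  show "dist (pos u) (pos v) \<le> (\<Sum>T\<in>Pow S. yv s' T * outside_weight T u v)"
    if "S \<in> act s'" "u \<in> S" "v \<in> S" for S u v
  proof (cases "S = Su \<union> Sv")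
    case True
    then show ?thesis using merged_radius that unchanged by simp
  next
    case False
    then show ?thesis using other_active that active_radius unchanged by simp
  qed
qed

end

context gd_invariant
begin

lemma merge_invariant:
  assumes "gd_merge n pos atime sg s s'"
  shows "gd_invariant n pos atime sg bip s'"
proof -
  obtain a b Su Sv where merge: "Su \<in> act s" "Sv \<in> act s" "Su \<noteq> Sv" "a \<in> Su" "b \<in> Sv"
      "tight_edge n pos atime sg s a b" "tm s' = tm s" "narr s' = narr s" "yv s' = yv s"
      "act s' = insert (Su \<union> Sv) (act s - {Su, Sv})" "fr s' \<subseteq> fr s" "fr s - fr s' \<subseteq> Su \<union> Sv"
    and newly_matched: "\<forall>w \<in> fr s - fr s'. mate s' w \<in> fr s - fr s' \<and> mate s' w \<noteq> w \<and>
         mate s' (mate s' w) = w \<and> sg (mate s' w) = - sg w \<and> mtm s' w = tm s"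
    and others_kept: "\<forall>w. w \<notin> fr s - fr s' \<longrightarrow> mate s' w = mate s w \<and> mtm s' w = mtm s w"
    and no_free_pair: "\<not> (\<exists>x\<in>fr s' \<inter> (Su \<union> Sv). \<exists>y\<in>fr s' \<inter> (Su \<union> Sv). x \<noteq> y \<and> sg x = - sg y)"
    using assms unfolding gd_merge_def by (elim exE conjE) (rule that; assumption)
  have "gd_merge_step n pos atime sg bip s s' a b Su Sv"
  proof unfold_locales
    show "dual_sum n (yv s) a b = ecost pos atime a b" using merge(6) by (simp add: tight_edge_def)
    show "mate s' w \<in> fr s - fr s' \<and> mate s' w \<noteq> w \<and> mate s' (mate s' w) = w \<and>
        sg (mate s' w) = - sg w \<and> mtm s' w = tm s" if "w \<in> fr s - fr s'" for w
      using newly_matched that by blast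
    show "mate s' w = mate s w \<and> mtm s' w = mtm s w" if "w \<notin> fr s - fr s'" for w
      using others_kept that by blast
    show "sg x \<noteq> - sg y" if "x \<in> fr s' \<inter> (Su \<union> Sv)" "y \<in> fr s' \<inter> (Su \<union> Sv)" "x \<noteq> y" for x y
      using no_free_pair that by blast
  qed (rule merge)+
  then show ?thesis by (rule gd_merge_step.gd_invariant_after_merge)
qed

end

context gd_instance
begin

lemma gd_invariant_init: "gd_invariant n pos atime sg bip gd_init"
  by unfold_locales (simp_all add: gd_init_def waiting_cost_def dual_value_def partition_on_empty)

lemma reachable_gd_invariant:
  assumes "(gd_step n pos atime sg)\<^sup>*\<^sup>* gd_init s"
  shows "gd_invariant n pos atime sg bip s"
  using assms
proof (induction rule: rtranclp_induct)
  case base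
  show ?case by (rule gd_invariant_init)
next
  case (step s s')
  from step.hyps(2) consider "gd_arrive n atime s s'" | "gd_merge n pos atime sg s s'"
    | "gd_advance n pos atime sg s s'"
    unfolding gd_step_def by blast
  then show ?case
  proof cases
    case 1
    then show ?thesis by (rule gd_invariant.arrive_invariant[OF step.IH])
  next
    case 2
    then show ?thesis by (rule gd_invariant.merge_invariant[OF step.IH])
  next
    case 3
    then show ?thesis by (rule gd_invariant.advance_invariant[OF step.IH])
  qed
qed

end

theorem theorem1:
  fixes m :: nat and pos :: "nat \<Rightarrow> 'a::metric_space"
    and atime :: "nat \<Rightarrow> real" and sg :: "nat \<Rightarrow> int" and s :: gd_state
  assumes "mpmd_instance m atime sg \<or> mbpmd_instance m atime sg"
    and "gd_final_state (2*m) pos atime sg s"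
  shows "matching_cost (2*m) pos atime (mate s) (mtm s) \<le> (2 * real m + 1) * Opt (2*m) pos atime sg"
proof -
  obtain bip where "gd_instance (2*m) sg bip"
    using assms(1) unfolding mpmd_instance_def mbpmd_instance_def gd_instance_def by meson
  then interpret gd_instance "2*m" pos atime sg bip .
  from assms(2) have "(gd_step (2*m) pos atime sg)\<^sup>*\<^sup>* gd_init s" "narr s = 2*m" "fr s = {}"
    unfolding gd_final_state_def by simp_all
  then show ?thesis
    using gd_invariant.final_cost_bound[OF reachable_gd_invariant] by blast
qed

end
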